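(* Define integers $\lambda_r$ for $r\ge 1$ by $\lambda_1=1$ and $\lambda_r = 2\left(3^{\lceil r/2 \rceil}+1\right)\lambda_{\lceil r/2 \rceil}$ for $r \ge 2$. Then for every integer $t\ge 0$, $\lambda_{2^t} = 2^{t-1}\left(3^{2^t}-1\right)$. Consequently, for every $n$ of the form $n=3^{2^t}$ with $t\ge 0$ an integer, $g(n,3) \le \frac{1}{2}\, n\log_3 n$.
   Context: For integers $2\le k\le n$, let $S_n$ denote the set of permutations of $[n]=\{1,\dots,n\}$ (written as sequences), and $S_{n,k}$ the set of all sequences of $k$ distinct elements of $[n]$. A sequence $\kappa\in S_{n,k}$ is a subsequence of a permutation $\pi\in S_n$ if its elements appear in $\pi$ in the same relative order as in $\kappa$. A perfect sequence covering array ${\rm PSCA}(n,k)$ with multiplicity $\lambda$ (a positive integer) is a multiset $X$ of elements of $S_n$ such that every $\kappa\in S_{n,k}$ is a subsequence of exactly $\lambda$ elements of $X$ (counted with multiplicity). $g(n,k)$ denotes the smallest $\lambda$ for which a ${\rm PSCA}(n,k)$ with multiplicity $\lambda$ exists. *)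

theory Defs
  imports Complex_Main "HOL-Library.Multiset" "HOL-Library.Sublist"
begin

definition perms_seq :: "nat \<Rightarrow> nat list set" where
  "perms_seq n = {xs. distinct xs \<and> set xs = {1..n}}"

definition kseqs :: "nat \<Rightarrow> nat \<Rightarrow> nat list set" where
  "kseqs n k = {xs. distinct xs \<and> length xs = k \<and> set xs \<subseteq> {1..n}}"

definition is_PSCA :: "nat \<Rightarrow> nat \<Rightarrow> nat \<Rightarrow> nat list multiset \<Rightarrow> bool" where
  "is_PSCA n k lam X \<longleftrightarrow>
     (\<forall>\<pi>\<in>#X. \<pi> \<in> perms_seq n) \<and>
     (\<forall>\<kappa>\<in>kseqs n k. size (filter_mset (\<lambda>\<pi>. subseq \<kappa> \<pi>) X) = lam)"

definition g :: "nat \<Rightarrow> nat \<Rightarrow> nat" where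
  "g n k = (LEAST lam. 0 < lam \<and> (\<exists>X. is_PSCA n k lam X))"

text \<open>lambda_1 = 1, lambda_r = 2 (3^ceil(r/2) + 1) lambda_ceil(r/2) for r >= 2;
  ceil(r/2) = (r+1) div 2. The value at 0 is irrelevant.\<close>
fun lam :: "nat \<Rightarrow> nat" where
  "lam 0 = 0"
| "lam (Suc 0) = 1"
| "lam (Suc (Suc m)) = 2 * (3 ^ ((m + 3) div 2) + 1) * lam ((m + 3) div 2)"

end

theory Submission
  imports Defs "HOL-Number_Theory.Residues" "HOL-Algebra.Weak_Morphisms" "HOL-Library.Nat_Bijection"
begin

text \<open>A PSCA(q,3) with multiplicity \<open>\<lambda>\<close> and an affine plane of order q give a PSCA(q^2,3)
  with multiplicity 2(q+1)\<open>\<lambda>\<close>: for every parallel class and every permutation \<open>\<pi>\<close> of the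
  array, list the lines of the class in the order \<open>\<pi>\<close> induces on them and the points of each
  line in the order of \<open>\<pi>\<close> or of its reverse. For three points and a fixed class, if they lie on
  three different lines the 2\<open>\<lambda>\<close> rankings order them correctly 2\<open>\<lambda>\<close> times; if exactly two of
  them share a line, using both orientations turns the count into a pair count 3\<open>\<lambda>\<close>. Since two
  points share a line in exactly one class, the total is 2(q+1)\<open>\<lambda>\<close> in every case. Starting from
  the six permutations of three symbols and using the affine planes over GF(3^(2^t)), obtained
  by repeated quadratic extension, the multiplicity for n = 3^(2^t) is exactly \<open>lam (2 ^ t)\<close>.\<close>

lemma lam_two_power_Suc: "lam (2 ^ Suc t) = 2 * (3 ^ 2 ^ t + 1) * lam (2 ^ t)"
proof -
  obtain k where k: "2 ^ t = Suc k"
    using not0_implies_Suc by fastforce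
  then have "2 ^ Suc t = Suc (Suc (2 * k))" "(2 * k + 3) div 2 = (2::nat) ^ t"
    by simp_all
  then show ?thesis by (metis lam.simps(3))
qed

lemma lam_two_power: "real (lam (2 ^ t)) = 2 powr (real t - 1) * (3 ^ 2 ^ t - 1)"
proof (induction t)
  case 0
  then show ?case by (simp add: powr_minus)
next
  case (Suc t)
  have "real (lam (2 ^ Suc t)) = 2 * (3 ^ 2 ^ t + 1) * (2 powr (real t - 1) * (3 ^ 2 ^ t - 1))"
    unfolding lam_two_power_Suc by (simp add: Suc.IH algebra_simps)
  also have "\<dots> = (2 powr (real t - 1) * 2) * ((3 ^ 2 ^ t)\<^sup>2 - 1)"
    by (simp add: power2_eq_square algebra_simps)
  also have "\<dots> = 2 powr (real (Suc t) - 1) * (3 ^ 2 ^ Suc t - 1)"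
    by (simp add: powr_diff power_mult[symmetric] mult.commute)
  finally show ?case .
qed

text \<open>Permutations of V are represented by injective rankings r :: 'a \<Rightarrow> nat; the permutation
  itself is V sorted by r (see \<open>is_PSCA_sort_key\<close>).\<close>

definition ranking_psca :: "'a set \<Rightarrow> nat \<Rightarrow> ('a \<Rightarrow> nat) multiset \<Rightarrow> bool" where
  "ranking_psca V L Y \<longleftrightarrow> (\<forall>r\<in>#Y. inj_on r V) \<and>
     (\<forall>x\<in>V. \<forall>y\<in>V. \<forall>z\<in>V. x \<noteq> y \<and> y \<noteq> z \<and> x \<noteq> z \<longrightarrow>
        size (filter_mset (\<lambda>r. r x < r y \<and> r y < r z) Y) = L)"

lemma ranking_psca_inj_on: "ranking_psca V L Y \<Longrightarrow> r \<in># Y \<Longrightarrow> inj_on r V"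
  by (simp add: ranking_psca_def)

lemma ranking_psca_count:
  "ranking_psca V L Y \<Longrightarrow> x \<in> V \<Longrightarrow> y \<in> V \<Longrightarrow> z \<in> V \<Longrightarrow> x \<noteq> y \<Longrightarrow> y \<noteq> z \<Longrightarrow> x \<noteq> z
   \<Longrightarrow> size (filter_mset (\<lambda>r. r x < r y \<and> r y < r z) Y) = L"
  by (simp add: ranking_psca_def)

lemma size_filter_mset_eq_sum_mset: "size (filter_mset P M) = (\<Sum>r\<in>#M. of_bool (P r))"
  by (induction M) auto

lemma ranking_psca_pair_count:
  assumes Y: "ranking_psca V L Y" and "finite V" "3 \<le> card V"
    and a: "a \<in> V" and b: "b \<in> V" "a \<noteq> b"
  shows "size (filter_mset (\<lambda>r. r a < r b) Y) = 3 * L"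
proof -
  have "card (V - {a, b}) \<noteq> 0"
    using card_Diff_subset[of "{a, b}" V] assms by auto
  then obtain c where c: "c \<in> V" "c \<noteq> a" "c \<noteq> b"
    by (metis DiffE all_not_in_conv card.empty insertCI)
  have "size (filter_mset (\<lambda>r. r a < r b) Y)
      = (\<Sum>r\<in>#Y. of_bool (r c < r a \<and> r a < r b) + of_bool (r a < r c \<and> r c < r b)
          + of_bool (r a < r b \<and> r b < r c))"
    unfolding size_filter_mset_eq_sum_mset
  proof (intro arg_cong[where f = sum_mset] image_mset_cong)
    fix r assume "r \<in># Y"
    then have "r c \<noteq> r a" "r c \<noteq> r b"
      using ranking_psca_inj_on[OF Y] a b c by (auto dest: inj_onD)
    then show "of_bool (r a < r b) = of_bool (r c < r a \<and> r a < r b)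
        + of_bool (r a < r c \<and> r c < r b) + (of_bool (r a < r b \<and> r b < r c) :: nat)"
      by auto
  qed
  also have "\<dots> = 3 * L"
    using ranking_psca_count[OF Y] a b c
    by (simp add: sum_mset.distrib size_filter_mset_eq_sum_mset[symmetric])
  finally show ?thesis .
qed

lemma ranking_psca_bij_betw:
  assumes h: "bij_betw h W V" and Y: "ranking_psca V L Y"
  shows "ranking_psca W L (image_mset (\<lambda>r. r \<circ> h) Y)"
  unfolding ranking_psca_def
proof (intro conjI ballI impI)
  fix s assume "s \<in># image_mset (\<lambda>r. r \<circ> h) Y"
  then show "inj_on s W"
    using h ranking_psca_inj_on[OF Y] by (auto simp: bij_betw_def intro: comp_inj_on)
next
  fix x y z assume "x \<in> W" "y \<in> W" "z \<in> W" "x \<noteq> y \<and> y \<noteq> z \<and> x \<noteq> z"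
  then show "size (filter_mset (\<lambda>s. s x < s y \<and> s y < s z) (image_mset (\<lambda>r. r \<circ> h) Y)) = L"
    using h ranking_psca_count[OF Y, of "h x" "h y" "h z"]
    by (auto simp: filter_mset_image_mset bij_betw_def inj_on_eq_iff)
qed

lemma subseq_iff_sorted_wrt:
  fixes r :: "'a \<Rightarrow> 'b::order"
  assumes "sorted_wrt (\<lambda>a b. r a < r b) ys"
  shows "subseq xs ys \<longleftrightarrow> set xs \<subseteq> set ys \<and> sorted_wrt (\<lambda>a b. r a < r b) xs"
  using assms
proof (induction ys arbitrary: xs)
  case Nil
  then show ?case by (auto dest: list_emb_Nil2)
next
  case (Cons y ys)
  show ?case
  proof (cases xs)
    case (Cons x xs')
    then show ?thesis
      using Cons.IH Cons.prems by (cases "x = y") (auto, fastforce+)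
  qed simp
qed

lemma sorted_wrt_sort_key_less:
  fixes r :: "'a \<Rightarrow> 'b::linorder"
  assumes "inj_on r (set xs)" "distinct xs"
  shows "sorted_wrt (\<lambda>a b. r a < r b) (sort_key r xs)"
proof -
  have "sorted (map r (sort_key r xs))" "distinct (map r (sort_key r xs))"
    using assms by (simp_all add: distinct_map)
  then have "sorted_wrt (<) (map r (sort_key r xs))"
    by (simp add: strict_sorted_iff)
  then show ?thesis
    by (simp add: sorted_wrt_map)
qed

lemma is_PSCA_sort_key:
  assumes Y: "ranking_psca {1..n} L Y"
  shows "is_PSCA n 3 L (image_mset (\<lambda>r. sort_key r [1..<Suc n]) Y)"
  unfolding is_PSCA_def
proof (intro conjI ballI)
  fix \<pi> assume "\<pi> \<in># image_mset (\<lambda>r. sort_key r [1..<Suc n]) Y"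
  then show "\<pi> \<in> perms_seq n" by (auto simp: perms_seq_def)
next
  fix \<kappa> assume "\<kappa> \<in> kseqs n 3"
  then obtain x y z where \<kappa>: "\<kappa> = [x, y, z]" and xyz: "x \<noteq> y" "y \<noteq> z" "x \<noteq> z"
    "x \<in> {1..n}" "y \<in> {1..n}" "z \<in> {1..n}"
    by (auto simp: kseqs_def numeral_3_eq_3 length_Suc_conv)
  have "filter_mset (\<lambda>r. subseq \<kappa> (sort_key r [1..<Suc n])) Y
      = filter_mset (\<lambda>r. r x < r y \<and> r y < r z) Y"
  proof (rule filter_mset_cong[OF refl])
    fix r assume "r \<in># Y"
    then have "inj_on r {1..n}"
      by (rule ranking_psca_inj_on[OF Y])
    then have "sorted_wrt (\<lambda>a b. r a < r b) (sort_key r [1..<Suc n])"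
      by (intro sorted_wrt_sort_key_less)
        (simp_all only: set_upt atLeastLessThanSuc_atLeastAtMost distinct_upt)
    then show "subseq \<kappa> (sort_key r [1..<Suc n]) \<longleftrightarrow> r x < r y \<and> r y < r z"
      using xyz by (auto simp: subseq_iff_sorted_wrt \<kappa>)
  qed
  then show "size (filter_mset (\<lambda>\<pi>. subseq \<kappa> \<pi>) (image_mset (\<lambda>r. sort_key r [1..<Suc n]) Y)) = L"
    using ranking_psca_count[OF Y] xyz by (simp add: filter_mset_image_mset)
qed

lemma g_le_of_ranking_psca:
  assumes "ranking_psca {1..n} L Y" "0 < L"
  shows "g n 3 \<le> L"
  unfolding g_def using assms is_PSCA_sort_key by (blast intro: Least_le)

definition all_rankings_three :: "(nat \<Rightarrow> nat) multiset" where
  "all_rankings_three = mset (map (\<lambda>\<sigma> i. \<sigma> ! i) [[0,1,2],[0,2,1],[1,0,2],[1,2,0],[2,0,1],[2,1,0]])"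

lemma ranking_psca_all_rankings_three: "ranking_psca {..<3} 1 all_rankings_three"
proof -
  have "{..<3::nat} = {0, 1, 2}" by auto
  then show ?thesis
    unfolding ranking_psca_def all_rankings_three_def by (auto simp: inj_on_def)
qed

lemma mult_add_less_mult_add_iff:
  fixes a a' b b' M :: nat
  assumes "b \<le> M" "b' \<le> M"
  shows "a * (M + 1) + b < a' * (M + 1) + b' \<longleftrightarrow> a < a' \<or> a = a' \<and> b < b'"
proof -
  have less: "c * (M + 1) + d < c' * (M + 1)" if "c < c'" "d \<le> M" for c c' d :: nat
  proof -
    have "c * (M + 1) + d < (c + 1) * (M + 1)" using that by simp
    also have "\<dots> \<le> c' * (M + 1)" using that by (intro mult_right_mono) auto
    finally show ?thesis .
  qed
  show ?thesis
    using less[of a a' b] less[of a' a b'] assms by (cases a a' rule: linorder_cases) auto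
qed

text \<open>\<open>Max (r ` V) + 1\<close> is the base of a two-digit encoding of the lexicographic order.\<close>

definition lex_rank :: "'a set \<Rightarrow> ('a \<Rightarrow> nat) \<Rightarrow> bool \<Rightarrow> 'a \<times> 'a \<Rightarrow> nat" where
  "lex_rank V r desc p = r (fst p) * (Max (r ` V) + 1)
     + (if desc then Max (r ` V) - r (snd p) else r (snd p))"

definition lex_square :: "'a set \<Rightarrow> ('a \<Rightarrow> nat) multiset \<Rightarrow> ('a \<times> 'a \<Rightarrow> nat) multiset" where
  "lex_square V Y = image_mset (\<lambda>r. lex_rank V r False) Y + image_mset (\<lambda>r. lex_rank V r True) Y"

lemma lex_rank_less_iff:
  assumes "finite V" "p \<in> V \<times> V" "p' \<in> V \<times> V"
  shows "lex_rank V r desc p < lex_rank V r desc p' \<longleftrightarrow> r (fst p) < r (fst p') \<or>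
    r (fst p) = r (fst p') \<and> (if desc then r (snd p') < r (snd p) else r (snd p) < r (snd p'))"
proof -
  have "r (snd p) \<le> Max (r ` V)" "r (snd p') \<le> Max (r ` V)"
    using assms by auto
  then show ?thesis
    unfolding lex_rank_def by (subst mult_add_less_mult_add_iff) auto
qed

lemma inj_on_lex_rank:
  assumes "finite V" "inj_on r V"
  shows "inj_on (lex_rank V r desc) (V \<times> V)"
proof (rule inj_onI)
  fix p p' assume p: "p \<in> V \<times> V" and p': "p' \<in> V \<times> V"
    and "lex_rank V r desc p = lex_rank V r desc p'"
  then have "r (fst p) = r (fst p')" "r (snd p) = r (snd p')"
    using lex_rank_less_iff[OF \<open>finite V\<close> p p', of r desc]
      lex_rank_less_iff[OF \<open>finite V\<close> p' p, of r desc]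
    by (auto split: if_splits)
  then show "p = p'"
    using p p' \<open>inj_on r V\<close> by (auto simp: prod_eq_iff dest: inj_onD)
qed

lemma size_filter_lex_square:
  "size (filter_mset P (lex_square V Y))
     = (\<Sum>r\<in>#Y. of_bool (P (lex_rank V r False)) + of_bool (P (lex_rank V r True)))"
  by (simp add: lex_square_def size_filter_mset_eq_sum_mset image_mset.compositionality comp_def sum_mset.distrib)

lemma lex_square_count:
  assumes Y: "ranking_psca V L Y" and V: "finite V" "3 \<le> card V"
    and x: "x \<in> V \<times> V" and y: "y \<in> V \<times> V" and z: "z \<in> V \<times> V"
    and "x \<noteq> y" "y \<noteq> z" "x \<noteq> z"
  shows "size (filter_mset (\<lambda>s. s x < s y \<and> s y < s z) (lex_square V Y))
       + 2 * L * of_bool (fst x = fst z)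
     = 2 * L + L * of_bool (fst x = fst y) + L * of_bool (fst y = fst z)"
proof -
  obtain x1 x2 y1 y2 z1 z2 where xyz: "x = (x1, x2)" "y = (y1, y2)" "z = (z1, z2)"
    by (cases x, cases y, cases z)
  have in_V: "x1 \<in> V" "x2 \<in> V" "y1 \<in> V" "y2 \<in> V" "z1 \<in> V" "z2 \<in> V"
    using x y z xyz by auto
  have eq_iff: "r a = r b \<longleftrightarrow> a = b" if "r \<in># Y" "a \<in> V" "b \<in> V" for r a b
    using ranking_psca_inj_on[OF Y that(1)] that(2,3) by (auto dest: inj_onD)
  have less_iff: "lex_rank V r desc p < lex_rank V r desc p' \<longleftrightarrow> r (fst p) < r (fst p') \<or>
      fst p = fst p' \<and> (if desc then r (snd p') < r (snd p) else r (snd p) < r (snd p'))"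
    if "r \<in># Y" "p \<in> {x, y, z}" "p' \<in> {x, y, z}" for r desc p p'
    using lex_rank_less_iff[OF V(1), of p p' r desc] eq_iff[OF that(1)] that x y z
    by (auto simp: mem_Times_iff)
  let ?T = "\<lambda>s. s x < s y \<and> s y < s z"
  let ?count = "size (filter_mset ?T (lex_square V Y))"
  have sum_cong: "?count = (\<Sum>r\<in>#Y. f r)"
    if "\<And>r. r \<in># Y \<Longrightarrow> of_bool (?T (lex_rank V r False)) + of_bool (?T (lex_rank V r True)) = f r"
    for f :: "(_ \<Rightarrow> nat) \<Rightarrow> nat"
    unfolding size_filter_lex_square by (intro arg_cong[where f = sum_mset] image_mset_cong that)
  consider "x1 = y1" "y1 = z1" | "x1 = y1" "y1 \<noteq> z1" | "x1 \<noteq> y1" "y1 = z1"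
    | "x1 = z1" "x1 \<noteq> y1" | "x1 \<noteq> y1" "y1 \<noteq> z1" "x1 \<noteq> z1"
    by blast
  then show ?thesis
  proof cases
    case 1
    then have "x2 \<noteq> y2" "y2 \<noteq> z2" "x2 \<noteq> z2"
      using assms(7-9) xyz by auto
    have "?count = (\<Sum>r\<in>#Y. of_bool (r x2 < r y2 \<and> r y2 < r z2) + of_bool (r z2 < r y2 \<and> r y2 < r x2))"
      using 1 by (intro sum_cong) (auto simp: less_iff xyz)
    also have "\<dots> = 2 * L"
      using ranking_psca_count[OF Y] in_V \<open>x2 \<noteq> y2\<close> \<open>y2 \<noteq> z2\<close> \<open>x2 \<noteq> z2\<close>
      by (simp add: sum_mset.distrib size_filter_mset_eq_sum_mset[symmetric])
    finally show ?thesis using 1 xyz by simp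
  next
    case 2
    then have "x2 \<noteq> y2"
      using assms(7) xyz by auto
    have "?count = (\<Sum>r\<in>#Y. of_bool (r x1 < r z1))"
      using 2 \<open>x2 \<noteq> y2\<close> by (intro sum_cong) (auto simp: less_iff xyz eq_iff in_V)
    also have "\<dots> = 3 * L"
      using ranking_psca_pair_count[OF Y V] in_V 2
      by (simp add: size_filter_mset_eq_sum_mset[symmetric])
    finally show ?thesis using 2 xyz by simp
  next
    case 3
    then have "y2 \<noteq> z2"
      using assms(8) xyz by auto
    have "?count = (\<Sum>r\<in>#Y. of_bool (r x1 < r y1))"
      using 3 \<open>y2 \<noteq> z2\<close> by (intro sum_cong) (auto simp: less_iff xyz eq_iff in_V)
    also have "\<dots> = 3 * L"
      using ranking_psca_pair_count[OF Y V] in_V 3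
      by (simp add: size_filter_mset_eq_sum_mset[symmetric])
    finally show ?thesis using 3 xyz by simp
  next
    case 4
    have "?count = (\<Sum>r\<in>#Y. 0)"
      using 4 by (intro sum_cong) (auto simp: less_iff xyz)
    then show ?thesis using 4 xyz by simp
  next
    case 5
    have "?count = (\<Sum>r\<in>#Y. of_bool (r x1 < r y1 \<and> r y1 < r z1) + of_bool (r x1 < r y1 \<and> r y1 < r z1))"
      using 5 by (intro sum_cong) (auto simp: less_iff xyz)
    also have "\<dots> = 2 * L"
      using ranking_psca_count[OF Y] in_V 5
      by (simp add: sum_mset.distrib size_filter_mset_eq_sum_mset[symmetric])
    finally show ?thesis using 5 xyz by simp
  qed
qed

text \<open>Each c \<in> C is a parallel class of lines, and \<open>\<phi> c p\<close> is the pair (line of class c through p,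
  position of p on that line).\<close>

definition affine_plane_coords ::
    "'p set \<Rightarrow> 'v set \<Rightarrow> 'c set \<Rightarrow> ('c \<Rightarrow> 'p \<Rightarrow> 'v \<times> 'v) \<Rightarrow> bool" where
  "affine_plane_coords P V C \<phi> \<longleftrightarrow> finite C \<and> (\<forall>c\<in>C. inj_on (\<phi> c) P \<and> \<phi> c ` P \<subseteq> V \<times> V) \<and>
     (\<forall>p\<in>P. \<forall>p'\<in>P. p \<noteq> p' \<longrightarrow> card {c\<in>C. fst (\<phi> c p) = fst (\<phi> c p')} = 1)"

definition plane_rankings ::
    "'c set \<Rightarrow> ('c \<Rightarrow> 'p \<Rightarrow> 'v \<times> 'v) \<Rightarrow> 'v set \<Rightarrow> ('v \<Rightarrow> nat) multiset \<Rightarrow> ('p \<Rightarrow> nat) multiset" where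
  "plane_rankings C \<phi> V Y = (\<Sum>c\<in>C. image_mset (\<lambda>s. s \<circ> \<phi> c) (lex_square V Y))"

lemma filter_mset_sum: "filter_mset P (\<Sum>c\<in>C. M c) = (\<Sum>c\<in>C. filter_mset P (M c))"
  by (induction C rule: infinite_finite_induct) auto

lemma ranking_psca_plane_rankings:
  assumes A: "affine_plane_coords P V C \<phi>" and Y: "ranking_psca V L Y"
    and V: "finite V" "3 \<le> card V"
  shows "ranking_psca P (2 * card C * L) (plane_rankings C \<phi> V Y)"
proof -
  have C: "finite C" "\<And>c. c \<in> C \<Longrightarrow> inj_on (\<phi> c) P \<and> \<phi> c ` P \<subseteq> V \<times> V"
    and meet: "\<And>p p'. p \<in> P \<Longrightarrow> p' \<in> P \<Longrightarrow> p \<noteq> p' \<Longrightarrow> card {c\<in>C. fst (\<phi> c p) = fst (\<phi> c p')} = 1"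
    using A by (auto simp: affine_plane_coords_def)
  show ?thesis
    unfolding ranking_psca_def
  proof (intro conjI ballI impI)
    fix s assume "s \<in># plane_rankings C \<phi> V Y"
    then obtain c r desc where c: "c \<in> C" and r: "r \<in># Y" and s: "s = lex_rank V r desc \<circ> \<phi> c"
      using C(1) by (auto simp: plane_rankings_def set_mset_sum lex_square_def)
    have "inj_on (lex_rank V r desc) (\<phi> c ` P)"
      using inj_on_lex_rank[OF V(1) ranking_psca_inj_on[OF Y r]] C(2)[OF c] by (blast intro: inj_on_subset)
    then show "inj_on s P"
      using C(2)[OF c] s by (simp add: comp_inj_on)
  next
    fix x y z assume xyz: "x \<in> P" "y \<in> P" "z \<in> P" "x \<noteq> y \<and> y \<noteq> z \<and> x \<noteq> z"
    let ?line = "\<lambda>p p'. {c\<in>C. fst (\<phi> c p) = fst (\<phi> c p')}"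
    define v where "v c = size (filter_mset (\<lambda>s. s (\<phi> c x) < s (\<phi> c y) \<and> s (\<phi> c y) < s (\<phi> c z))
      (lex_square V Y))" for c
    have v: "v c + 2 * L * of_bool (fst (\<phi> c x) = fst (\<phi> c z))
        = 2 * L + L * of_bool (fst (\<phi> c x) = fst (\<phi> c y)) + L * of_bool (fst (\<phi> c y) = fst (\<phi> c z))"
      if c: "c \<in> C" for c
      unfolding v_def using C(2)[OF c] xyz c
      by (intro lex_square_count[OF Y V]) (auto dest: inj_onD)
    have "(\<Sum>c\<in>C. v c) + 2 * L * card (?line x z)
        = 2 * L * card C + L * card (?line x y) + L * card (?line y z)"
      using sum.cong[OF refl v, of C] C(1)
      by (simp add: sum.distrib sum_distrib_left[symmetric] Int_def)
    then have "(\<Sum>c\<in>C. v c) = 2 * card C * L"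
      using meet xyz by simp
    then show "size (filter_mset (\<lambda>s. s x < s y \<and> s y < s z) (plane_rankings C \<phi> V Y)) = 2 * card C * L"
      by (simp add: plane_rankings_def filter_mset_sum filter_mset_image_mset v_def)
  qed
qed

definition slope_classes :: "('a, 'b) ring_scheme \<Rightarrow> 'a option set" where
  "slope_classes R = insert None (Some ` carrier R)"

text \<open>\<open>None\<close> is the class of vertical lines x = const; \<open>Some m\<close> is the class of lines
  y = m x + b, indexed by b.\<close>

definition line_coords :: "('a, 'b) ring_scheme \<Rightarrow> 'a option \<Rightarrow> 'a \<times> 'a \<Rightarrow> 'a \<times> 'a" where
  "line_coords R c p = (case c of None \<Rightarrow> p | Some m \<Rightarrow> (snd p \<ominus>\<^bsub>R\<^esub> m \<otimes>\<^bsub>R\<^esub> fst p, fst p))"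

context field
begin

lemma line_coords_in_carrier:
  "c \<in> slope_classes R \<Longrightarrow> p \<in> carrier R \<times> carrier R \<Longrightarrow> line_coords R c p \<in> carrier R \<times> carrier R"
  by (auto simp: slope_classes_def line_coords_def)

lemma common_line_slope_iff:
  assumes "m \<in> carrier R" "x \<in> carrier R" "y \<in> carrier R" "x' \<in> carrier R" "y' \<in> carrier R"
  shows "fst (line_coords R (Some m) (x, y)) = fst (line_coords R (Some m) (x', y'))
    \<longleftrightarrow> m \<otimes> (x \<ominus> x') = y \<ominus> y'"
proof -
  have "fst (line_coords R (Some m) (x, y)) = fst (line_coords R (Some m) (x', y'))
      \<longleftrightarrow> (y \<ominus> m \<otimes> x) \<ominus> (y' \<ominus> m \<otimes> x') = \<zero>"
    using assms by (simp add: line_coords_def)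
  also have "(y \<ominus> m \<otimes> x) \<ominus> (y' \<ominus> m \<otimes> x') = (y \<ominus> y') \<ominus> m \<otimes> (x \<ominus> x')"
    using assms by algebra
  finally show ?thesis
    using assms by auto
qed

lemma inj_on_line_coords:
  assumes "c \<in> slope_classes R"
  shows "inj_on (line_coords R c) (carrier R \<times> carrier R)"
proof (rule inj_onI, clarify)
  fix x y x' y' assume xy: "x \<in> carrier R" "y \<in> carrier R" "x' \<in> carrier R" "y' \<in> carrier R"
    and eq: "line_coords R c (x, y) = line_coords R c (x', y')"
  show "x = x' \<and> y = y'"
  proof (cases c)
    case (Some m)
    then have "m \<in> carrier R" "x = x'"
      using assms eq by (auto simp: slope_classes_def line_coords_def)
    then have "y \<ominus> y' = \<zero>"
      using eq common_line_slope_iff[of m x y x' y'] xy Some by (simp add: a_minus_def r_neg)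
    then show ?thesis
      using \<open>x = x'\<close> xy by simp
  qed (use eq in \<open>simp add: line_coords_def\<close>)
qed

lemma card_common_line_classes:
  assumes "p \<in> carrier R \<times> carrier R" "p' \<in> carrier R \<times> carrier R" "p \<noteq> p'"
  shows "card {c \<in> slope_classes R. fst (line_coords R c p) = fst (line_coords R c p')} = 1"
proof -
  obtain x y x' y' where p: "p = (x, y)" "p' = (x', y')"
    by (cases p, cases p')
  have xy: "x \<in> carrier R" "y \<in> carrier R" "x' \<in> carrier R" "y' \<in> carrier R"
    using assms p by auto
  let ?common = "\<lambda>c. fst (line_coords R c p) = fst (line_coords R c p')"
  have slope: "?common (Some m) \<longleftrightarrow> m \<otimes> (x \<ominus> x') = y \<ominus> y'" if "m \<in> carrier R" for m
    using common_line_slope_iff[OF that xy] p by simp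
  show ?thesis
  proof (cases "x = x'")
    case True
    then have "y \<ominus> y' \<noteq> \<zero>"
      using assms(3) p xy by simp
    then have "\<not> ?common (Some m)" if "m \<in> carrier R" for m
      using slope[OF that] that xy True by (simp add: a_minus_def r_neg)
    then have "{c \<in> slope_classes R. ?common c} = {None}"
      using True p by (auto simp: slope_classes_def line_coords_def)
    then show ?thesis by simp
  next
    case False
    then have d: "x \<ominus> x' \<in> Units R"
      using xy field_Units by simp
    define m0 where "m0 = (y \<ominus> y') \<otimes> inv (x \<ominus> x')"
    have "m0 \<in> carrier R" "m0 \<otimes> (x \<ominus> x') = y \<ominus> y'"
      using d xy by (simp_all add: m0_def m_assoc)
    then have "?common (Some m) \<longleftrightarrow> m = m0" if "m \<in> carrier R" for m
      using slope[OF that] m_rcancel[of "x \<ominus> x'" m m0] d that xy False by auto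
    then have "{c \<in> slope_classes R. ?common c} = {Some m0}"
      using False p \<open>m0 \<in> carrier R\<close> by (auto simp: slope_classes_def line_coords_def)
    then show ?thesis by simp
  qed
qed

lemma affine_plane_coords_field:
  assumes "finite (carrier R)"
  shows "affine_plane_coords (carrier R \<times> carrier R) (carrier R) (slope_classes R) (line_coords R)"
  unfolding affine_plane_coords_def
proof (intro conjI ballI impI)
  show "finite (slope_classes R)"
    using assms by (simp add: slope_classes_def)
next
  fix c assume "c \<in> slope_classes R"
  then show "inj_on (line_coords R c) (carrier R \<times> carrier R)"
    and "line_coords R c ` (carrier R \<times> carrier R) \<subseteq> carrier R \<times> carrier R"
    using inj_on_line_coords line_coords_in_carrier by blast+
qed (rule card_common_line_classes)

end

lemma card_slope_classes: "finite (carrier R) \<Longrightarrow> card (slope_classes R) = card (carrier R) + 1"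
  by (auto simp: slope_classes_def card_image)

text \<open>The ring R[\<open>\<surd>\<close>d], with (a, b) standing for a + b\<open>\<surd>\<close>d.\<close>

definition qext :: "('a, 'b) ring_scheme \<Rightarrow> 'a \<Rightarrow> ('a \<times> 'a) ring" where
  "qext R d = \<lparr>carrier = carrier R \<times> carrier R,
     mult = (\<lambda>(a, b) (a', b'). (a \<otimes>\<^bsub>R\<^esub> a' \<oplus>\<^bsub>R\<^esub> d \<otimes>\<^bsub>R\<^esub> (b \<otimes>\<^bsub>R\<^esub> b'), a \<otimes>\<^bsub>R\<^esub> b' \<oplus>\<^bsub>R\<^esub> b \<otimes>\<^bsub>R\<^esub> a')),
     one = (\<one>\<^bsub>R\<^esub>, \<zero>\<^bsub>R\<^esub>),
     zero = (\<zero>\<^bsub>R\<^esub>, \<zero>\<^bsub>R\<^esub>),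
     add = (\<lambda>(a, b) (a', b'). (a \<oplus>\<^bsub>R\<^esub> a', b \<oplus>\<^bsub>R\<^esub> b'))\<rparr>"

lemma (in cring) qext_cring:
  assumes d: "d \<in> carrier R"
  shows "cring (qext R d)"
proof (rule cringI)
  show "abelian_group (qext R d)"
  proof (rule abelian_groupI)
    fix p assume "p \<in> carrier (qext R d)"
    then show "\<exists>q\<in>carrier (qext R d). q \<oplus>\<^bsub>qext R d\<^esub> p = \<zero>\<^bsub>qext R d\<^esub>"
      by (intro bexI[of _ "(\<ominus> fst p, \<ominus> snd p)"]) (auto simp: qext_def l_neg)
  qed (auto simp: qext_def a_ac)
  show "comm_monoid (qext R d)"
  proof (rule comm_monoidI)
    fix p q s assume "p \<in> carrier (qext R d)" "q \<in> carrier (qext R d)" "s \<in> carrier (qext R d)"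
    then show "p \<otimes>\<^bsub>qext R d\<^esub> q \<otimes>\<^bsub>qext R d\<^esub> s = p \<otimes>\<^bsub>qext R d\<^esub> (q \<otimes>\<^bsub>qext R d\<^esub> s)"
      using d by (clarsimp simp: qext_def) (intro conjI; algebra)
  qed (use d in \<open>auto simp: qext_def m_comm a_comm\<close>)
next
  fix p q s assume "p \<in> carrier (qext R d)" "q \<in> carrier (qext R d)" "s \<in> carrier (qext R d)"
  then show "(p \<oplus>\<^bsub>qext R d\<^esub> q) \<otimes>\<^bsub>qext R d\<^esub> s = p \<otimes>\<^bsub>qext R d\<^esub> s \<oplus>\<^bsub>qext R d\<^esub> q \<otimes>\<^bsub>qext R d\<^esub> s"
    using d by (clarsimp simp: qext_def) (intro conjI; algebra)
qed

lemma (in field) qext_norm_nonzero: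
  assumes d: "d \<in> carrier R" "\<forall>u\<in>carrier R. u \<otimes> u \<noteq> d"
    and ab: "a \<in> carrier R" "b \<in> carrier R" "(a, b) \<noteq> (\<zero>, \<zero>)"
  shows "a \<otimes> a \<ominus> d \<otimes> (b \<otimes> b) \<noteq> \<zero>"
proof
  assume norm: "a \<otimes> a \<ominus> d \<otimes> (b \<otimes> b) = \<zero>"
  show False
  proof (cases "b = \<zero>")
    case True
    then show False
      using norm ab d integral[of a a] by (auto simp: a_minus_def)
  next
    case False
    then have "inv b \<in> carrier R" "b \<otimes> inv b = \<one>"
      using ab field_Units by auto
    have "a \<otimes> a = (a \<otimes> a \<ominus> d \<otimes> (b \<otimes> b)) \<oplus> d \<otimes> (b \<otimes> b)"
      using ab d by algebra
    then have aa: "a \<otimes> a = d \<otimes> (b \<otimes> b)"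
      using norm ab d by simp
    have "(a \<otimes> inv b) \<otimes> (a \<otimes> inv b) = (a \<otimes> a) \<otimes> (inv b \<otimes> inv b)"
      using ab \<open>inv b \<in> carrier R\<close> by algebra
    also have "\<dots> = d \<otimes> ((b \<otimes> inv b) \<otimes> (b \<otimes> inv b))"
      unfolding aa using ab d \<open>inv b \<in> carrier R\<close> by algebra
    finally have "(a \<otimes> inv b) \<otimes> (a \<otimes> inv b) = d"
      using \<open>b \<otimes> inv b = \<one>\<close> d by simp
    then show False
      using d ab \<open>inv b \<in> carrier R\<close> by auto
  qed
qed

lemma (in field) qext_field:
  assumes d: "d \<in> carrier R" "\<forall>u\<in>carrier R. u \<otimes> u \<noteq> d"
  shows "field (qext R d)"
proof -
  interpret Q: cring "qext R d"
    using qext_cring d by blast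
  show ?thesis
  proof (rule Q.cring_fieldI2)
    fix p assume p: "p \<in> carrier (qext R d)" "p \<noteq> \<zero>\<^bsub>qext R d\<^esub>"
    obtain a b where ab: "p = (a, b)" "a \<in> carrier R" "b \<in> carrier R" "(a, b) \<noteq> (\<zero>, \<zero>)"
      using p by (cases p) (auto simp: qext_def)
    define N where "N = a \<otimes> a \<ominus> d \<otimes> (b \<otimes> b)"
    have "N \<in> carrier R" "N \<noteq> \<zero>"
      using qext_norm_nonzero[OF d ab(2-4)] ab d by (simp_all add: N_def)
    then have N: "inv N \<in> carrier R" "N \<otimes> inv N = \<one>"
      using field_Units by auto
    show "\<exists>q\<in>carrier (qext R d). p \<otimes>\<^bsub>qext R d\<^esub> q = \<one>\<^bsub>qext R d\<^esub>"
    proof (intro bexI)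
      show "p \<otimes>\<^bsub>qext R d\<^esub> (a \<otimes> inv N, \<ominus> b \<otimes> inv N) = \<one>\<^bsub>qext R d\<^esub>"
        using ab N d unfolding N_def by (clarsimp simp: qext_def) (intro conjI; algebra)
    qed (use ab N in \<open>simp add: qext_def\<close>)
  qed (simp add: qext_def)
qed

lemma (in field) nonsquare_exists:
  assumes "finite (carrier R)" "\<one> \<oplus> \<one> \<noteq> \<zero>"
  shows "\<exists>d\<in>carrier R. \<forall>u\<in>carrier R. u \<otimes> u \<noteq> d"
proof (rule ccontr)
  assume "\<not> ?thesis"
  then have "carrier R \<subseteq> (\<lambda>u. u \<otimes> u) ` carrier R"
    by (auto simp: image_iff)
  then have "inj_on (\<lambda>u. u \<otimes> u) (carrier R)"
    by (rule finite_surj_inj[OF assms(1)])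
  moreover have "(\<ominus> \<one>) \<otimes> (\<ominus> \<one>) = \<one> \<otimes> \<one>"
    by (simp add: l_minus r_minus)
  ultimately have "\<ominus> \<one> = \<one>"
    by (rule inj_onD) simp_all
  then have "\<one> \<oplus> \<one> = \<zero>"
    using l_neg[of \<one>] by simp
  with assms(2) show False ..
qed

lemma (in field) image_ring_field:
  assumes f: "inj_on f (carrier R)" and char: "\<one> \<oplus> \<one> \<noteq> \<zero>"
  defines "S \<equiv> image_ring f R"
  shows "field S" "card (carrier S) = card (carrier R)" "\<one>\<^bsub>S\<^esub> \<oplus>\<^bsub>S\<^esub> \<one>\<^bsub>S\<^esub> \<noteq> \<zero>\<^bsub>S\<^esub>"
proof -
  have iso: "f \<in> ring_iso R S"
    unfolding S_def using f by (rule inj_imp_image_ring_iso)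
  show "field S"
    unfolding S_def using f by (rule inj_imp_image_ring_is_field)
  show "card (carrier S) = card (carrier R)"
    using f by (simp add: S_def image_ring_carrier card_image)
  have "\<one>\<^bsub>S\<^esub> \<oplus>\<^bsub>S\<^esub> \<one>\<^bsub>S\<^esub> = f (\<one> \<oplus> \<one>)"
    using ring_iso_memE(3,4)[OF iso] by simp
  then show "\<one>\<^bsub>S\<^esub> \<oplus>\<^bsub>S\<^esub> \<one>\<^bsub>S\<^esub> \<noteq> \<zero>\<^bsub>S\<^esub>"
    using char f by (simp add: S_def image_ring_zero inj_on_eq_iff)
qed

text \<open>The fields are kept on carrier type nat so that the induction stays in one type; the
  characteristic is kept different from 2 so that a nonsquare exists at each step.\<close>

lemma nat_field_three_pow:
  "\<exists>R::nat ring. field R \<and> card (carrier R) = 3 ^ 2 ^ t \<and> \<one>\<^bsub>R\<^esub> \<oplus>\<^bsub>R\<^esub> \<one>\<^bsub>R\<^esub> \<noteq> \<zero>\<^bsub>R\<^esub>"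
proof (induction t)
  case 0
  interpret Z3: residues_prime 3 "residue_ring (int 3)"
    by unfold_locales auto
  have "inj_on nat (carrier (residue_ring (int 3)))"
    by (auto simp: residue_ring_def inj_on_def)
  moreover have "card (carrier (residue_ring (int 3))) = 3"
    by (simp add: residue_ring_def)
  moreover have "\<one>\<^bsub>residue_ring (int 3)\<^esub> \<oplus>\<^bsub>residue_ring (int 3)\<^esub> \<one>\<^bsub>residue_ring (int 3)\<^esub>
      \<noteq> \<zero>\<^bsub>residue_ring (int 3)\<^esub>"
    by (simp add: residue_ring_def)
  ultimately show ?case
    using Z3.image_ring_field by (metis power_0 power_one_right)
next
  case (Suc t)
  then obtain R :: "nat ring" where R: "field R" "card (carrier R) = 3 ^ 2 ^ t"
    and char: "\<one>\<^bsub>R\<^esub> \<oplus>\<^bsub>R\<^esub> \<one>\<^bsub>R\<^esub> \<noteq> \<zero>\<^bsub>R\<^esub>"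
    by blast
  interpret R: field R by (rule R(1))
  obtain d where d: "d \<in> carrier R" "\<forall>u\<in>carrier R. u \<otimes>\<^bsub>R\<^esub> u \<noteq> d"
    using R.nonsquare_exists[OF _ char] R(2) card_ge_0_finite by force
  interpret Q: field "qext R d"
    using R.qext_field[OF d] .
  have "card (carrier (qext R d)) = 3 ^ 2 ^ Suc t"
    using R(2) by (simp add: qext_def card_cartesian_product power_add[symmetric])
  moreover have "\<one>\<^bsub>qext R d\<^esub> \<oplus>\<^bsub>qext R d\<^esub> \<one>\<^bsub>qext R d\<^esub> \<noteq> \<zero>\<^bsub>qext R d\<^esub>"
    using char by (simp add: qext_def)
  ultimately show ?case
    using Q.image_ring_field[OF inj_on_subset[OF inj_prod_encode subset_UNIV]] by metis
qed

lemma ranking_psca_three_pow: "\<exists>Y. ranking_psca {..<(3::nat) ^ 2 ^ t} (lam (2 ^ t)) Y"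
proof (induction t)
  case 0
  show ?case
    using ranking_psca_all_rankings_three by auto
next
  case (Suc t)
  let ?q = "3 ^ 2 ^ t :: nat"
  obtain Y where Y: "ranking_psca {..<?q} (lam (2 ^ t)) Y"
    using Suc.IH by blast
  obtain R :: "nat ring" where R: "field R" "card (carrier R) = ?q"
    using nat_field_three_pow by blast
  interpret R: field R by (rule R(1))
  have fin: "finite (carrier R)"
    using R(2) card_ge_0_finite by force
  obtain h where "bij_betw h (carrier R) {..<?q}"
    using finite_same_card_bij[OF fin, of "{..<?q}"] R(2) by auto
  then have Y': "ranking_psca (carrier R) (lam (2 ^ t)) (image_mset (\<lambda>r. r \<circ> h) Y)"
    using Y by (rule ranking_psca_bij_betw)
  have "3 \<le> card (carrier R)"
    using R(2) power_increasing[of 1 "2 ^ t" "3::nat"] by simp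
  then have "ranking_psca (carrier R \<times> carrier R) (2 * card (slope_classes R) * lam (2 ^ t))
      (plane_rankings (slope_classes R) (line_coords R) (carrier R) (image_mset (\<lambda>r. r \<circ> h) Y))"
    using ranking_psca_plane_rankings[OF R.affine_plane_coords_field[OF fin] Y' fin] by blast
  moreover have "2 * card (slope_classes R) * lam (2 ^ t) = lam (2 ^ Suc t)"
    using lam_two_power_Suc card_slope_classes[OF fin] R(2) by simp
  moreover have "card (carrier R \<times> carrier R) = 3 ^ 2 ^ Suc t"
    using R(2) by (simp add: card_cartesian_product power_add[symmetric])
  then obtain h' where "bij_betw h' {..<(3::nat) ^ 2 ^ Suc t} (carrier R \<times> carrier R)"
    using finite_same_card_bij[of "{..<(3::nat) ^ 2 ^ Suc t}" "carrier R \<times> carrier R"] fin by auto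
  ultimately show ?case
    using ranking_psca_bij_betw by metis
qed

lemma g_three_pow_le_lam: "g (3 ^ 2 ^ t) 3 \<le> lam (2 ^ t)"
proof -
  let ?n = "3 ^ 2 ^ t :: nat"
  have "(1::real) < 3 ^ 2 ^ t"
    by (rule one_less_power) auto
  then have "0 < real (lam (2 ^ t))"
    using lam_two_power[of t] by simp
  then have "0 < lam (2 ^ t)"
    by simp
  obtain Y where "ranking_psca {..<?n} (lam (2 ^ t)) Y"
    using ranking_psca_three_pow by blast
  moreover have "bij_betw (\<lambda>i. i - 1) {1..?n} {..<?n}"
    by (rule bij_betw_byWitness[where f' = Suc]) auto
  ultimately have "ranking_psca {1..?n} (lam (2 ^ t)) (image_mset (\<lambda>r. r \<circ> (\<lambda>i. i - 1)) Y)"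
    by (blast intro: ranking_psca_bij_betw)
  then show ?thesis
    using \<open>0 < lam (2 ^ t)\<close> by (rule g_le_of_ranking_psca)
qed

theorem mainTheorem6:
  shows "(\<forall>t::nat. real (lam (2 ^ t)) = 2 powr (real t - 1) * (3 ^ (2 ^ t) - 1))
       \<and> (\<forall>t::nat. \<forall>n::nat. n = 3 ^ (2 ^ t) \<longrightarrow> real (g n 3) \<le> 1/2 * real n * log 3 (real n))"
proof (intro conjI allI impI)
  fix t :: nat
  show "real (lam (2 ^ t)) = 2 powr (real t - 1) * (3 ^ (2 ^ t) - 1)"
    by (rule lam_two_power)
next
  fix t n :: nat assume n: "n = 3 ^ (2 ^ t)"
  have "real (g n 3) \<le> real (lam (2 ^ t))"
    using g_three_pow_le_lam n by simp
  also have "\<dots> = 2 ^ t / 2 * (real n - 1)"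
    using n by (simp add: lam_two_power powr_diff powr_realpow)
  also have "\<dots> \<le> 1/2 * real n * log 3 (real n)"
    using n by (simp add: log_nat_power)
  finally show "real (g n 3) \<le> 1/2 * real n * log 3 (real n)" .
qed

end
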